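(* Let $m\ge1$ and let $G=mK_2$ be the simple graph consisting of $m$ pairwise disjoint edges, whose vertices are among the variables of $S=\mathbb{K}[x_1,\dots,x_n]$, $\mathbb{K}$ a field. Then $\operatorname{sreg}(S/I(G))=\lceil m/2\rceil$.
   Context: For a simple graph $G$ with vertices identified with variables, $I(G)=(xy : \{x,y\}\in E(G))\subset S$ is its edge ideal. Stanley regularity: for a squarefree monomial ideal $I\subset S$, a squarefree Stanley decomposition of $S/I$ is a decomposition $S/I=\bigoplus_{i=1}^r u_i\mathbb{K}[Z_i]$ as $\mathbb{K}$-vector spaces, where $Z_i\subseteq\{x_1,\dots,x_n\}$, $u_i$ are (images of) squarefree monomials with $\operatorname{supp}(u_i)\subseteq Z_i$, and each $u_i\mathbb{K}[Z_i]$ is free over $\mathbb{K}[Z_i]$. Its Stanley regularity is $\max_i\deg(u_i)$, and $\operatorname{sreg}(S/I)$ is the minimum over all such decompositions. *)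

theory Defs
  imports Main
begin

text \<open>Monomials of S = K[x_0,...,x_{n-1}] are exponent vectors a :: nat \<Rightarrow> nat
  vanishing outside {..<n}. Since the edge ideal is a monomial ideal, S/I(G) has the
  K-basis of standard monomials (monomials not in I(G)), and a squarefree Stanley
  decomposition is described by its monomial bases.\<close>

definition mono_set :: "nat \<Rightarrow> (nat \<Rightarrow> nat) set" where
  "mono_set n = {a. \<forall>i\<ge>n. a i = 0}"

definition msupp :: "(nat \<Rightarrow> nat) \<Rightarrow> nat set" where
  "msupp a = {i. a i \<noteq> 0}"

definition mdeg :: "nat \<Rightarrow> (nat \<Rightarrow> nat) \<Rightarrow> nat" where
  "mdeg n a = (\<Sum>i<n. a i)"

definition squarefree_mono :: "(nat \<Rightarrow> nat) \<Rightarrow> bool" where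
  "squarefree_mono a \<longleftrightarrow> (\<forall>i. a i \<le> 1)"

text \<open>Edges are 2-element sets of variables; a monomial lies in I(G) iff it is
  divisible by x_i x_j for some edge {i,j}.\<close>
definition in_edge_ideal :: "nat set set \<Rightarrow> (nat \<Rightarrow> nat) \<Rightarrow> bool" where
  "in_edge_ideal E a \<longleftrightarrow> (\<exists>x y. x \<noteq> y \<and> {x, y} \<in> E \<and> a x > 0 \<and> a y > 0)"

definition standard_monos :: "nat \<Rightarrow> nat set set \<Rightarrow> (nat \<Rightarrow> nat) set" where
  "standard_monos n E = {a \<in> mono_set n. \<not> in_edge_ideal E a}"

text \<open>Monomial basis of the Stanley space u K[Z].\<close>
definition stanley_space :: "(nat \<Rightarrow> nat) \<Rightarrow> nat set \<Rightarrow> (nat \<Rightarrow> nat) set" where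
  "stanley_space u Z = {a. \<exists>v. msupp v \<subseteq> Z \<and> a = (\<lambda>i. u i + v i)}"

text \<open>Squarefree Stanley decomposition S/I(G) = (+) u_i K[Z_i]: Z_i variables,
  u_i squarefree with supp u_i \<subseteq> Z_i, u_i K[Z_i] free (no monomial of it lies in I),
  the sum is direct and exhausts S/I(G).\<close>
definition sq_stanley_decomp ::
  "nat \<Rightarrow> nat set set \<Rightarrow> ((nat \<Rightarrow> nat) \<times> nat set) list \<Rightarrow> bool" where
  "sq_stanley_decomp n E D \<longleftrightarrow>
     (\<forall>k<length D. fst (D!k) \<in> mono_set n \<and> snd (D!k) \<subseteq> {..<n}
        \<and> squarefree_mono (fst (D!k)) \<and> msupp (fst (D!k)) \<subseteq> snd (D!k)
        \<and> stanley_space (fst (D!k)) (snd (D!k)) \<inter> {a. in_edge_ideal E a} = {}) \<and>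
     (\<forall>k<length D. \<forall>l<length D. k \<noteq> l \<longrightarrow>
        stanley_space (fst (D!k)) (snd (D!k)) \<inter> stanley_space (fst (D!l)) (snd (D!l)) = {}) \<and>
     (\<Union>k<length D. stanley_space (fst (D!k)) (snd (D!k))) = standard_monos n E"

definition stanley_reg_of :: "nat \<Rightarrow> ((nat \<Rightarrow> nat) \<times> nat set) list \<Rightarrow> nat" where
  "stanley_reg_of n D = Max (insert 0 (set (map (\<lambda>p. mdeg n (fst p)) D)))"

definition sreg :: "nat \<Rightarrow> nat set set \<Rightarrow> nat" where
  "sreg n E = (LEAST r. \<exists>D. sq_stanley_decomp n E D \<and> stanley_reg_of n D = r)"

end

theory Submission
  imports Defs
begin

text \<open>A squarefree Stanley decomposition of S/I(G) amounts to a partition of the independence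
  complex of G into intervals [F, Z] = {H. F \<subseteq> H \<subseteq> Z} with Z independent: the space
  u K[Z] contributes the interval [supp u, Z], and its degree is |F|. For a matching the
  partitions of two edges (lower sets of size at most 1) multiply over disjoint vertex sets, which
  gives regularity \<lceil>m/2\<rceil>. Conversely, among the 2^m transversals picking one vertex
  of every edge, exchanging the vertex on a single edge e yields two transversals whose cells
  cannot both have lower sets missing e, since otherwise the two cells share a face and one upper
  set would contain e. Averaging, the lower sets meet on average at least m/2 edges.\<close>

definition indep_set :: "nat set set \<Rightarrow> nat set \<Rightarrow> bool" where
  "indep_set E G \<longleftrightarrow> (\<forall>e\<in>E. \<not> e \<subseteq> G)"

definition interval :: "nat set \<times> nat set \<Rightarrow> nat set set" where
  "interval p = {G. fst p \<subseteq> G \<and> G \<subseteq> snd p}"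

definition interval_partition :: "nat set \<Rightarrow> nat set set \<Rightarrow> (nat set \<times> nat set) set \<Rightarrow> bool" where
  "interval_partition V E P \<longleftrightarrow> finite P
     \<and> (\<forall>p\<in>P. fst p \<subseteq> snd p \<and> snd p \<subseteq> V \<and> indep_set E (snd p))
     \<and> (\<forall>p\<in>P. \<forall>q\<in>P. p \<noteq> q \<longrightarrow> interval p \<inter> interval q = {})
     \<and> (\<forall>G. G \<subseteq> V \<longrightarrow> indep_set E G \<longrightarrow> (\<exists>p\<in>P. G \<in> interval p))"

lemma indep_set_mono: "indep_set E G \<Longrightarrow> H \<subseteq> G \<Longrightarrow> indep_set E H"
  unfolding indep_set_def by blast

lemma mem_interval_iff [simp]: "G \<in> interval p \<longleftrightarrow> fst p \<subseteq> G \<and> G \<subseteq> snd p"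
  by (simp add: interval_def)

lemma interval_partitionI:
  assumes "finite P"
    and "\<And>p. p \<in> P \<Longrightarrow> fst p \<subseteq> snd p \<and> snd p \<subseteq> V \<and> indep_set E (snd p)"
    and "\<And>p q G. p \<in> P \<Longrightarrow> q \<in> P \<Longrightarrow> G \<in> interval p \<Longrightarrow> G \<in> interval q \<Longrightarrow> p = q"
    and "\<And>G. G \<subseteq> V \<Longrightarrow> indep_set E G \<Longrightarrow> \<exists>p\<in>P. G \<in> interval p"
  shows "interval_partition V E P"
  using assms unfolding interval_partition_def by blast

lemma interval_partition_cell:
  "interval_partition V E P \<Longrightarrow> p \<in> P \<Longrightarrow> fst p \<subseteq> snd p \<and> snd p \<subseteq> V \<and> indep_set E (snd p)"
  unfolding interval_partition_def by blast

lemma interval_partition_unique: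
  "interval_partition V E P \<Longrightarrow> p \<in> P \<Longrightarrow> q \<in> P \<Longrightarrow> G \<in> interval p \<Longrightarrow> G \<in> interval q \<Longrightarrow> p = q"
  unfolding interval_partition_def by blast

lemma interval_partition_cover:
  "interval_partition V E P \<Longrightarrow> G \<subseteq> V \<Longrightarrow> indep_set E G \<Longrightarrow> \<exists>p\<in>P. G \<in> interval p"
  unfolding interval_partition_def by blast

lemma interval_partition_no_edges: "interval_partition V {} {({}, V)}"
  by (auto simp: interval_partition_def indep_set_def)

lemma interval_partition_edge:
  assumes "a \<noteq> b"
  shows "interval_partition {a, b} {{a, b}} {({}, {a}), ({b}, {b})}"
  using assms by (auto simp: interval_partition_def indep_set_def)

text \<open>The independence complex of 2K_2 on a-b, c-d is the 4-cycle a-c-b-d-a; cut it into the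
  empty face and four edges, each together with one of its vertices.\<close>
lemma interval_partition_two_edges:
  assumes "distinct [a, b, c, d]"
  shows "interval_partition {a, b, c, d} {{a, b}, {c, d}}
           {({}, {}), ({a}, {a, c}), ({c}, {b, c}), ({b}, {b, d}), ({d}, {a, d})}"
  unfolding interval_partition_def
proof (intro conjI ballI allI impI)
  fix G assume "G \<subseteq> {a, b, c, d}" "indep_set {{a, b}, {c, d}} G"
  then show "\<exists>p\<in>{({}, {}), ({a}, {a, c}), ({c}, {b, c}), ({b}, {b, d}), ({d}, {a, d})}. G \<in> interval p"
    unfolding indep_set_def by (cases "a \<in> G"; cases "b \<in> G"; cases "c \<in> G"; cases "d \<in> G") auto
qed (use assms in \<open>auto simp: indep_set_def\<close>)

definition interval_product ::
  "(nat set \<times> nat set) set \<Rightarrow> (nat set \<times> nat set) set \<Rightarrow> (nat set \<times> nat set) set" where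
  "interval_product P Q = (\<lambda>(p, q). (fst p \<union> fst q, snd p \<union> snd q)) ` (P \<times> Q)"

lemma card_fst_interval_product:
  assumes "p \<in> interval_product P Q" "\<forall>q\<in>P. card (fst q) \<le> r" "\<forall>q\<in>Q. card (fst q) \<le> s"
  shows "card (fst p) \<le> r + s"
  using assms card_Un_le unfolding interval_product_def by (fastforce intro: order_trans)

lemma interval_partition_product:
  assumes P: "interval_partition V E P" and Q: "interval_partition W F Q"
    and VW: "V \<inter> W = {}" and EV: "\<forall>e\<in>E. e \<subseteq> V" and FW: "\<forall>e\<in>F. e \<subseteq> W"
  shows "interval_partition (V \<union> W) (E \<union> F) (interval_product P Q)"
proof -
  have indep_Un: "indep_set (E \<union> F) G \<longleftrightarrow> indep_set E (G \<inter> V) \<and> indep_set F (G \<inter> W)" for G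
    using EV FW unfolding indep_set_def by (simp add: ball_Un le_inf_iff)
  have split: "G \<in> interval (fst p \<union> fst q, snd p \<union> snd q) \<longleftrightarrow>
      G \<inter> V \<in> interval p \<and> G \<inter> W \<in> interval q \<and> G \<subseteq> V \<union> W" if "p \<in> P" "q \<in> Q" for G p q
    using interval_partition_cell[OF P \<open>p \<in> P\<close>] interval_partition_cell[OF Q \<open>q \<in> Q\<close>] VW
    by auto
  show ?thesis
  proof (rule interval_partitionI)
    show "finite (interval_product P Q)"
      using P Q by (simp add: interval_partition_def interval_product_def)
  next
    fix r assume "r \<in> interval_product P Q"
    then obtain p q where pq: "p \<in> P" "q \<in> Q" "r = (fst p \<union> fst q, snd p \<union> snd q)"
      unfolding interval_product_def by auto
    have "snd r \<inter> V = snd p" "snd r \<inter> W = snd q"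
      using interval_partition_cell[OF P pq(1)] interval_partition_cell[OF Q pq(2)] VW pq(3) by auto
    then have "indep_set (E \<union> F) (snd r)"
      using interval_partition_cell[OF P pq(1)] interval_partition_cell[OF Q pq(2)] indep_Un by simp
    then show "fst r \<subseteq> snd r \<and> snd r \<subseteq> V \<union> W \<and> indep_set (E \<union> F) (snd r)"
      using interval_partition_cell[OF P pq(1)] interval_partition_cell[OF Q pq(2)] pq(3) by auto
  next
    fix r r' G assume "r \<in> interval_product P Q" "r' \<in> interval_product P Q"
      and G: "G \<in> interval r" "G \<in> interval r'"
    then obtain p q p' q' where pq: "p \<in> P" "q \<in> Q" "r = (fst p \<union> fst q, snd p \<union> snd q)"
      and pq': "p' \<in> P" "q' \<in> Q" "r' = (fst p' \<union> fst q', snd p' \<union> snd q')"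
      unfolding interval_product_def by auto
    have "G \<inter> V \<in> interval p" "G \<inter> V \<in> interval p'" "G \<inter> W \<in> interval q" "G \<inter> W \<in> interval q'"
      using G split pq pq' by auto
    then have "p = p'" "q = q'"
      using interval_partition_unique[OF P pq(1) pq'(1)] interval_partition_unique[OF Q pq(2) pq'(2)]
      by blast+
    then show "r = r'" using pq(3) pq'(3) by simp
  next
    fix G assume G: "G \<subseteq> V \<union> W" "indep_set (E \<union> F) G"
    then obtain p q where "p \<in> P" "G \<inter> V \<in> interval p" "q \<in> Q" "G \<inter> W \<in> interval q"
      using interval_partition_cover[OF P, of "G \<inter> V"] interval_partition_cover[OF Q, of "G \<inter> W"]
        indep_Un by auto
    moreover have "(fst p \<union> fst q, snd p \<union> snd q) \<in> interval_product P Q"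
      using \<open>p \<in> P\<close> \<open>q \<in> Q\<close> unfolding interval_product_def by force
    ultimately show "\<exists>r\<in>interval_product P Q. G \<in> interval r"
      using split G(1) by blast
  qed
qed

lemma interval_partition_extend:
  assumes P0: "interval_partition V0 E0 P0" "\<forall>p\<in>P0. card (fst p) \<le> r0" "\<forall>e\<in>E0. e \<subseteq> V0"
    and P1: "interval_partition (V - V0) E1 P1" "\<forall>p\<in>P1. card (fst p) \<le> r1" "\<forall>e\<in>E1. e \<subseteq> V - V0"
    and "V0 \<subseteq> V"
  shows "\<exists>P. interval_partition V (E0 \<union> E1) P \<and> (\<forall>p\<in>P. card (fst p) \<le> r0 + r1)"
proof -
  have "interval_partition (V0 \<union> (V - V0)) (E0 \<union> E1) (interval_product P0 P1)"
    using P0 P1 by (intro interval_partition_product) auto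
  moreover have "V0 \<union> (V - V0) = V" using \<open>V0 \<subseteq> V\<close> by blast
  ultimately show ?thesis
    using card_fst_interval_product P0(2) P1(2) by metis
qed

definition matching :: "nat set set \<Rightarrow> bool" where
  "matching E \<longleftrightarrow> (\<forall>e\<in>E. \<exists>x y. x \<noteq> y \<and> e = {x, y}) \<and> (\<forall>e\<in>E. \<forall>f\<in>E. e \<noteq> f \<longrightarrow> e \<inter> f = {})"

lemma matching_edge: "matching E \<Longrightarrow> e \<in> E \<Longrightarrow> \<exists>x y. x \<noteq> y \<and> e = {x, y}"
  unfolding matching_def by blast

lemma matching_disjoint: "matching E \<Longrightarrow> e \<in> E \<Longrightarrow> f \<in> E \<Longrightarrow> e \<noteq> f \<Longrightarrow> e \<inter> f = {}"
  unfolding matching_def by blast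

lemma matching_edge_unique: "matching E \<Longrightarrow> e \<in> E \<Longrightarrow> f \<in> E \<Longrightarrow> x \<in> e \<Longrightarrow> x \<in> f \<Longrightarrow> e = f"
  using matching_disjoint by blast

lemma matching_subset: "matching E \<Longrightarrow> F \<subseteq> E \<Longrightarrow> matching F"
  unfolding matching_def by (meson subsetD)

lemma ex_interval_partition_matching:
  assumes "matching E" "finite E" "\<forall>e\<in>E. e \<subseteq> V"
  shows "\<exists>P. interval_partition V E P \<and> (\<forall>p\<in>P. card (fst p) \<le> (card E + 1) div 2)"
  using assms
proof (induction "card E" arbitrary: E V rule: less_induct)
  case less
  consider "E = {}" | e where "E = {e}" | e f where "e \<in> E" "f \<in> E" "e \<noteq> f"
    by blast
  then show ?case
  proof cases
    case 1
    then show ?thesis using interval_partition_no_edges by fastforce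
  next
    case (2 e)
    then obtain a b where ab: "a \<noteq> b" "E = {{a, b}}" "{a, b} \<subseteq> V"
      using less.prems unfolding matching_def by auto
    have "\<exists>P. interval_partition V ({{a, b}} \<union> {}) P \<and> (\<forall>p\<in>P. card (fst p) \<le> 1 + 0)"
      using ab
      by (intro interval_partition_extend[OF interval_partition_edge _ _ interval_partition_no_edges]) auto
    then show ?thesis using ab by simp
  next
    case (3 e f)
    obtain a b c d where ab: "a \<noteq> b" "e = {a, b}" and cd: "c \<noteq> d" "f = {c, d}"
      using matching_edge[OF less.prems(1)] 3 by metis
    moreover have "e \<inter> f = {}" using matching_disjoint[OF less.prems(1)] 3 by blast
    ultimately have abcd: "distinct [a, b, c, d]" by auto
    let ?E' = "E - {e, f}"
    have E: "E = {{a, b}, {c, d}} \<union> ?E'" using 3 ab cd by blast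
    have card: "card E = card ?E' + 2"
      using 3 less.prems(2) card_mono[of E "{e, f}"] by (simp add: card_Diff_subset)
    have rest: "\<forall>g\<in>?E'. g \<subseteq> V - {a, b, c, d}"
    proof
      fix g assume "g \<in> ?E'"
      then have "g \<inter> e = {}" "g \<inter> f = {}" "g \<subseteq> V"
        using matching_disjoint[OF less.prems(1)] 3 less.prems(3) by auto
      then show "g \<subseteq> V - {a, b, c, d}" using ab cd by auto
    qed
    obtain P1 where P1: "interval_partition (V - {a, b, c, d}) ?E' P1"
        "\<forall>p\<in>P1. card (fst p) \<le> (card ?E' + 1) div 2"
      using less.hyps[of ?E' "V - {a, b, c, d}"] less.prems card rest
      by (metis matching_subset Diff_subset finite_Diff less_add_same_cancel1 zero_less_numeral)
    have "\<exists>P. interval_partition V ({{a, b}, {c, d}} \<union> ?E') P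
        \<and> (\<forall>p\<in>P. card (fst p) \<le> 1 + (card ?E' + 1) div 2)"
      by (rule interval_partition_extend[OF interval_partition_two_edges[OF abcd] _ _ P1])
        (use rest ab cd 3 less.prems(3) in auto)
    then show ?thesis by (simp only: E[symmetric] card) simp
  qed
qed

lemma interval_partition_edge_meets_lower:
  assumes P: "interval_partition V E P" and "{x, y} \<in> E"
    and p: "p \<in> P" "insert x R \<in> interval p" and q: "q \<in> P" "insert y R \<in> interval q"
  shows "x \<in> fst p \<or> y \<in> fst q"
proof (rule ccontr)
  assume "\<not> (x \<in> fst p \<or> y \<in> fst q)"
  then have "R \<in> interval p" "R \<in> interval q" using p(2) q(2) by auto
  then have "p = q" using interval_partition_unique[OF P p(1) q(1)] by blast
  then have "{x, y} \<subseteq> snd p" using p(2) q(2) by auto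
  then show False
    using interval_partition_cell[OF P p(1)] \<open>{x, y} \<in> E\<close> unfolding indep_set_def by blast
qed

lemma sum_card_filter_swap:
  assumes "finite A" "finite B"
  shows "(\<Sum>a\<in>A. card {b\<in>B. R a b}) = (\<Sum>b\<in>B. card {a\<in>A. R a b})"
proof -
  have count: "card {x\<in>X. P x} = (\<Sum>x\<in>X. if P x then 1 else 0)" if "finite X" for X P
    using that by (simp add: sum.If_cases Int_def)
  show ?thesis
    using assms by (simp add: count sum.swap[of _ A])
qed

lemma card_le_twice_card_filter_involution:
  assumes "finite S" "\<And>x. x \<in> S \<Longrightarrow> f x \<in> S" "\<And>x. x \<in> S \<Longrightarrow> f (f x) = x"
    and "\<And>x. x \<in> S \<Longrightarrow> P x \<or> P (f x)"
  shows "card S \<le> 2 * card {x\<in>S. P x}"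
proof -
  have "S \<subseteq> {x\<in>S. P x} \<union> f ` {x\<in>S. P x}"
  proof
    fix x assume "x \<in> S"
    show "x \<in> {x\<in>S. P x} \<union> f ` {x\<in>S. P x}"
    proof (cases "P x")
      case False
      then have "f x \<in> {x\<in>S. P x}" using assms(2,4) \<open>x \<in> S\<close> by blast
      then have "f (f x) \<in> f ` {x\<in>S. P x}" by (rule imageI)
      then show ?thesis using assms(3)[OF \<open>x \<in> S\<close>] by simp
    qed (use \<open>x \<in> S\<close> in simp)
  qed
  then have "card S \<le> card ({x\<in>S. P x} \<union> f ` {x\<in>S. P x})"
    using assms(1) by (intro card_mono) auto
  also have "\<dots> \<le> card {x\<in>S. P x} + card (f ` {x\<in>S. P x})" by (rule card_Un_le)
  also have "\<dots> \<le> 2 * card {x\<in>S. P x}" using card_image_le[of "{x\<in>S. P x}" f] assms(1) by simp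
  finally show ?thesis .
qed

lemma card_le_twice_by_double_counting:
  assumes "finite E" "finite S" "S \<noteq> {}"
    and "\<And>A. A \<in> S \<Longrightarrow> card {e\<in>E. R A e} \<le> r"
    and "\<And>e. e \<in> E \<Longrightarrow> card S \<le> 2 * card {A\<in>S. R A e}"
  shows "card E \<le> 2 * r"
proof -
  have "card E * card S \<le> (\<Sum>e\<in>E. 2 * card {A\<in>S. R A e})"
    using sum_bounded_below[of E "card S" "\<lambda>e. 2 * card {A\<in>S. R A e}"] assms(5) by simp
  also have "\<dots> = 2 * (\<Sum>e\<in>E. card {A\<in>S. R A e})" by (simp add: sum_distrib_left)
  also have "\<dots> = 2 * (\<Sum>A\<in>S. card {e\<in>E. R A e})"
    using sum_card_filter_swap[OF assms(2,1), of R] by simp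
  also have "\<dots> \<le> 2 * r * card S"
    using assms(4) sum_bounded_above[of S "\<lambda>A. card {e\<in>E. R A e}" r] by (simp add: mult.commute)
  finally show ?thesis using assms(2,3) by (simp add: card_gt_0_iff)
qed

definition toggle :: "'a \<Rightarrow> 'a set \<Rightarrow> 'a set" where
  "toggle x A = (if x \<in> A then A - {x} else insert x A)"

text \<open>An orientation u, v of the matching E lets a subset A of E encode the transversal taking the
  end u e on the edges e of A and the end v e on the others.\<close>
context
  fixes E :: "nat set set" and u v :: "nat set \<Rightarrow> nat"
  assumes E: "matching E" and uv: "\<And>e. e \<in> E \<Longrightarrow> u e \<noteq> v e \<and> e = {u e, v e}"
begin

definition chosen_end :: "nat set set \<Rightarrow> nat set \<Rightarrow> nat" where
  "chosen_end A e = (if e \<in> A then u e else v e)"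

definition transversal :: "nat set set \<Rightarrow> nat set" where
  "transversal A = chosen_end A ` E"

lemma chosen_end_mem: "e \<in> E \<Longrightarrow> chosen_end A e \<in> e"
  using uv by (auto simp: chosen_end_def)

lemma chosen_end_toggle: "e \<in> E \<Longrightarrow> {chosen_end A e, chosen_end (toggle e A) e} = e"
  using uv by (auto simp: chosen_end_def toggle_def insert_commute)

lemma chosen_end_inj:
  assumes "e \<in> E" "e' \<in> E" "chosen_end A e = chosen_end A' e'"
  shows "e = e'"
  using matching_edge_unique[OF E assms(1,2)] chosen_end_mem[OF assms(1)] chosen_end_mem[OF assms(2)]
    assms(3) by metis

lemma transversal_Int_edge:
  assumes "e \<in> E"
  shows "transversal A \<inter> e = {chosen_end A e}"
proof
  show "{chosen_end A e} \<subseteq> transversal A \<inter> e"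
    using assms chosen_end_mem unfolding transversal_def by blast
  show "transversal A \<inter> e \<subseteq> {chosen_end A e}"
  proof
    fix x assume x: "x \<in> transversal A \<inter> e"
    then obtain e' where e': "e' \<in> E" "x = chosen_end A e'" unfolding transversal_def by blast
    then have "e' = e"
      using matching_edge_unique[OF E e'(1) assms] chosen_end_mem[OF e'(1)] x by blast
    then show "x \<in> {chosen_end A e}" using e'(2) by simp
  qed
qed

lemma transversal_subset: "\<forall>e\<in>E. e \<subseteq> V \<Longrightarrow> transversal A \<subseteq> V"
  using chosen_end_mem unfolding transversal_def by blast

lemma indep_set_transversal: "indep_set E (transversal A)"
  unfolding indep_set_def
proof (intro ballI notI)
  fix e assume "e \<in> E" "e \<subseteq> transversal A"
  then have "e = {chosen_end A e}" using transversal_Int_edge[of e A] by blast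
  then show False using uv[OF \<open>e \<in> E\<close>] by (metis insertCI singletonD)
qed

lemma transversal_toggle:
  assumes "e \<in> E"
  shows "transversal (toggle e A) = insert (chosen_end (toggle e A) e) (transversal A - {chosen_end A e})"
proof -
  have "transversal A - {chosen_end A e} = chosen_end A ` (E - {e})"
    using chosen_end_inj assms unfolding transversal_def by blast
  moreover have "chosen_end (toggle e A) ` (E - {e}) = chosen_end A ` (E - {e})"
    unfolding chosen_end_def toggle_def by auto
  ultimately show ?thesis using assms unfolding transversal_def by blast
qed

end

lemma card_matching_le_twice_lower_card:
  assumes E: "matching E" and "finite V" and EV: "\<forall>e\<in>E. e \<subseteq> V"
    and P: "interval_partition V E P" and r: "\<forall>p\<in>P. card (fst p) \<le> r"
  shows "card E \<le> 2 * r"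
proof -
  have "finite E" using EV \<open>finite V\<close> by (intro finite_subset[of E "Pow V"]) auto
  obtain u v where uv: "\<And>e. e \<in> E \<Longrightarrow> u e \<noteq> v e \<and> e = {u e, v e}"
    using matching_edge[OF E] by metis
  let ?T = "transversal E u v" and ?end = "chosen_end u v"
  have "\<forall>A. \<exists>p. p \<in> P \<and> ?T A \<in> interval p"
    using interval_partition_cover[OF P] transversal_subset[OF E uv EV] indep_set_transversal[OF E uv]
    by blast
  then obtain cell where cell: "\<And>A. cell A \<in> P \<and> ?T A \<in> interval (cell A)"
    by metis
  show ?thesis
  proof (rule card_le_twice_by_double_counting[where R = "\<lambda>A e. ?end A e \<in> fst (cell A)"])
    fix A
    have "finite (fst (cell A))"
      using interval_partition_cell[OF P] cell \<open>finite V\<close> by (meson finite_subset)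
    have "card {e\<in>E. ?end A e \<in> fst (cell A)} = card (?end A ` {e\<in>E. ?end A e \<in> fst (cell A)})"
      using chosen_end_inj[OF E uv] by (intro card_image[symmetric] inj_onI) blast
    also have "\<dots> \<le> card (fst (cell A))"
      using \<open>finite (fst (cell A))\<close> by (intro card_mono) auto
    also have "\<dots> \<le> r" using r cell by blast
    finally show "card {e\<in>E. ?end A e \<in> fst (cell A)} \<le> r" .
  next
    fix e assume "e \<in> E"
    show "card (Pow E) \<le> 2 * card {A\<in>Pow E. ?end A e \<in> fst (cell A)}"
    proof (rule card_le_twice_card_filter_involution[where f = "toggle e"])
      fix A
      have "?T A = insert (?end A e) (?T A - {?end A e})"
        using transversal_Int_edge[OF E uv \<open>e \<in> E\<close>] by blast
      then show "?end A e \<in> fst (cell A) \<or> ?end (toggle e A) e \<in> fst (cell (toggle e A))"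
        using interval_partition_edge_meets_lower[OF P _ _ _ _ _]
          chosen_end_toggle[OF E uv \<open>e \<in> E\<close>, of A] transversal_toggle[OF E uv \<open>e \<in> E\<close>, of A]
          cell \<open>e \<in> E\<close> by metis
    qed (use \<open>finite E\<close> \<open>e \<in> E\<close> in \<open>auto simp: toggle_def\<close>)
  qed (use \<open>finite E\<close> in auto)
qed

definition sqf_monomial :: "nat set \<Rightarrow> nat \<Rightarrow> nat" where
  "sqf_monomial G = (\<lambda>i. if i \<in> G then 1 else 0)"

lemma msupp_sqf_monomial [simp]: "msupp (sqf_monomial G) = G"
  by (simp add: msupp_def sqf_monomial_def)

lemma squarefree_sqf_monomial: "squarefree_mono (sqf_monomial G)"
  by (simp add: squarefree_mono_def sqf_monomial_def)

lemma mono_set_iff_msupp: "a \<in> mono_set n \<longleftrightarrow> msupp a \<subseteq> {..<n}"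
proof -
  have "(\<forall>i\<ge>n. a i = 0) \<longleftrightarrow> (\<forall>i. a i \<noteq> 0 \<longrightarrow> i < n)" by (meson not_le)
  then show ?thesis by (simp add: mono_set_def msupp_def subset_iff)
qed

lemma mdeg_squarefree:
  assumes "squarefree_mono u" "u \<in> mono_set n"
  shows "mdeg n u = card (msupp u)"
proof -
  have "u i = (if i \<in> msupp u then 1 else 0)" for i
  proof -
    have "u i \<le> 1" using assms(1) by (simp add: squarefree_mono_def)
    then show ?thesis by (auto simp: msupp_def)
  qed
  then have "mdeg n u = card ({..<n} \<inter> msupp u)"
    unfolding mdeg_def by (simp add: sum.If_cases)
  also have "{..<n} \<inter> msupp u = msupp u" using assms(2) by (auto simp: mono_set_iff_msupp)
  finally show ?thesis .
qed

lemma in_edge_ideal_iff: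
  assumes "\<forall>e\<in>E. \<exists>x y. x \<noteq> y \<and> e = {x, y}"
  shows "in_edge_ideal E a \<longleftrightarrow> \<not> indep_set E (msupp a)"
  using assms unfolding in_edge_ideal_def indep_set_def msupp_def by fastforce

lemma standard_monos_eq:
  assumes "\<forall>e\<in>E. \<exists>x y. x \<noteq> y \<and> e = {x, y}"
  shows "standard_monos n E = {a. msupp a \<subseteq> {..<n} \<and> indep_set E (msupp a)}"
  using in_edge_ideal_iff[OF assms] by (auto simp: standard_monos_def mono_set_iff_msupp)

lemma stanley_space_squarefree:
  assumes "squarefree_mono u" "msupp u \<subseteq> Z"
  shows "stanley_space u Z = {a. msupp a \<in> interval (msupp u, Z)}"
proof (intro set_eqI iffI)
  fix a assume "a \<in> stanley_space u Z"
  then show "a \<in> {a. msupp a \<in> interval (msupp u, Z)}"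
    using assms(2) by (auto simp: stanley_space_def msupp_def)
next
  fix a assume "a \<in> {a. msupp a \<in> interval (msupp u, Z)}"
  then have supp: "msupp u \<subseteq> msupp a" "msupp a \<subseteq> Z" by auto
  have "u i \<le> a i" for i
  proof -
    have "u i \<le> 1" using assms(1) by (simp add: squarefree_mono_def)
    then show ?thesis using supp(1) by (cases "u i = 0") (auto simp: msupp_def)
  qed
  then have "a = (\<lambda>i. u i + (a i - u i))" by (simp add: fun_eq_iff)
  moreover have "msupp (\<lambda>i. a i - u i) \<subseteq> Z" using supp(2) by (auto simp: msupp_def)
  ultimately show "a \<in> stanley_space u Z"
    unfolding stanley_space_def by (intro CollectI exI[of _ "\<lambda>i. a i - u i"] conjI)
qed

definition sq_stanley_piece :: "nat \<Rightarrow> nat set set \<Rightarrow> (nat \<Rightarrow> nat) \<times> nat set \<Rightarrow> bool" where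
  "sq_stanley_piece n E d \<longleftrightarrow> fst d \<in> mono_set n \<and> snd d \<subseteq> {..<n}
     \<and> squarefree_mono (fst d) \<and> msupp (fst d) \<subseteq> snd d
     \<and> stanley_space (fst d) (snd d) \<inter> {a. in_edge_ideal E a} = {}"

lemma sq_stanley_decompD:
  assumes "sq_stanley_decomp n E D"
  shows "\<And>d. d \<in> set D \<Longrightarrow> sq_stanley_piece n E d"
    and "\<And>d d' a. d \<in> set D \<Longrightarrow> d' \<in> set D \<Longrightarrow> a \<in> stanley_space (fst d) (snd d) \<Longrightarrow>
           a \<in> stanley_space (fst d') (snd d') \<Longrightarrow> d = d'"
    and "(\<Union>d\<in>set D. stanley_space (fst d) (snd d)) = standard_monos n E"
proof -
  note D = assms[unfolded sq_stanley_decomp_def]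
  show "sq_stanley_piece n E d" if "d \<in> set D" for d
    using that D unfolding sq_stanley_piece_def in_set_conv_nth by blast
  show "d = d'" if "d \<in> set D" "d' \<in> set D" "a \<in> stanley_space (fst d) (snd d)"
    "a \<in> stanley_space (fst d') (snd d')" for d d' a
    using that D unfolding in_set_conv_nth by blast
  have "set D = (\<lambda>k. D ! k) ` {..<length D}" unfolding set_conv_nth by auto
  then show "(\<Union>d\<in>set D. stanley_space (fst d) (snd d)) = standard_monos n E"
    using D by simp
qed

lemma sq_stanley_decompI:
  assumes "distinct D" "\<And>d. d \<in> set D \<Longrightarrow> sq_stanley_piece n E d"
    and "\<And>d d' a. d \<in> set D \<Longrightarrow> d' \<in> set D \<Longrightarrow> a \<in> stanley_space (fst d) (snd d) \<Longrightarrow>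
           a \<in> stanley_space (fst d') (snd d') \<Longrightarrow> d = d'"
    and "(\<Union>d\<in>set D. stanley_space (fst d) (snd d)) = standard_monos n E"
  shows "sq_stanley_decomp n E D"
proof -
  have pieces: "\<forall>k<length D. sq_stanley_piece n E (D ! k)" using assms(2) by simp
  have disjoint: "\<forall>k<length D. \<forall>l<length D. k \<noteq> l \<longrightarrow>
      stanley_space (fst (D!k)) (snd (D!k)) \<inter> stanley_space (fst (D!l)) (snd (D!l)) = {}"
    using assms(3)[OF nth_mem nth_mem] nth_eq_iff_index_eq[OF assms(1)] by blast
  have "set D = (\<lambda>k. D ! k) ` {..<length D}" unfolding set_conv_nth by auto
  then have "(\<Union>k<length D. stanley_space (fst (D!k)) (snd (D!k))) = standard_monos n E"
    using assms(4) by simp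
  with pieces disjoint show ?thesis
    unfolding sq_stanley_decomp_def sq_stanley_piece_def by blast
qed

lemma sq_stanley_piece_iff:
  assumes "\<forall>e\<in>E. \<exists>x y. x \<noteq> y \<and> e = {x, y}"
  shows "sq_stanley_piece n E (u, Z) \<longleftrightarrow>
    squarefree_mono u \<and> msupp u \<subseteq> Z \<and> Z \<subseteq> {..<n} \<and> indep_set E Z"
proof
  assume piece: "sq_stanley_piece n E (u, Z)"
  then have "sqf_monomial Z \<in> stanley_space u Z"
    by (simp add: sq_stanley_piece_def stanley_space_squarefree)
  then have "indep_set E Z"
    using piece in_edge_ideal_iff[OF assms, of "sqf_monomial Z"] unfolding sq_stanley_piece_def
    by auto
  with piece show "squarefree_mono u \<and> msupp u \<subseteq> Z \<and> Z \<subseteq> {..<n} \<and> indep_set E Z"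
    by (simp add: sq_stanley_piece_def)
next
  assume u: "squarefree_mono u \<and> msupp u \<subseteq> Z \<and> Z \<subseteq> {..<n} \<and> indep_set E Z"
  then have "\<not> in_edge_ideal E a" if "a \<in> stanley_space u Z" for a
    using that indep_set_mono[of E Z "msupp a"] in_edge_ideal_iff[OF assms]
    by (auto simp: stanley_space_squarefree)
  with u show "sq_stanley_piece n E (u, Z)"
    by (auto simp: sq_stanley_piece_def mono_set_iff_msupp)
qed

lemma mdeg_le_stanley_reg_of: "d \<in> set D \<Longrightarrow> mdeg n (fst d) \<le> stanley_reg_of n D"
  unfolding stanley_reg_of_def by (rule Max_ge) auto

lemma stanley_reg_of_le: "(\<And>d. d \<in> set D \<Longrightarrow> mdeg n (fst d) \<le> r) \<Longrightarrow> stanley_reg_of n D \<le> r"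
  unfolding stanley_reg_of_def by (subst Max_le_iff) auto

lemma interval_partition_of_sq_stanley_decomp:
  assumes edges: "\<forall>e\<in>E. \<exists>x y. x \<noteq> y \<and> e = {x, y}" and D: "sq_stanley_decomp n E D"
  shows "interval_partition {..<n} E ((\<lambda>(u, Z). (msupp u, Z)) ` set D)"
proof -
  have piece: "squarefree_mono u \<and> msupp u \<subseteq> Z \<and> Z \<subseteq> {..<n} \<and> indep_set E Z"
    if "(u, Z) \<in> set D" for u Z
    using sq_stanley_decompD(1)[OF D that] sq_stanley_piece_iff[OF edges] by blast
  have sqf_in_space: "sqf_monomial G \<in> stanley_space u Z \<longleftrightarrow> G \<in> interval (msupp u, Z)"
    if "(u, Z) \<in> set D" for u Z G
    using piece[OF that] by (simp add: stanley_space_squarefree)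
  show ?thesis
  proof (rule interval_partitionI)
    fix p q G assume "p \<in> (\<lambda>(u, Z). (msupp u, Z)) ` set D" "q \<in> (\<lambda>(u, Z). (msupp u, Z)) ` set D"
      and G: "G \<in> interval p" "G \<in> interval q"
    then obtain u Z u' Z' where d: "(u, Z) \<in> set D" "p = (msupp u, Z)"
      and d': "(u', Z') \<in> set D" "q = (msupp u', Z')" by auto
    have "sqf_monomial G \<in> stanley_space u Z" "sqf_monomial G \<in> stanley_space u' Z'"
      using sqf_in_space[OF d(1)] sqf_in_space[OF d'(1)] G d(2) d'(2) by auto
    then have "(u, Z) = (u', Z')" using sq_stanley_decompD(2)[OF D d(1) d'(1)] by simp
    then show "p = q" using d(2) d'(2) by simp
  next
    fix G assume "G \<subseteq> {..<n}" "indep_set E G"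
    then have "sqf_monomial G \<in> standard_monos n E" by (simp add: standard_monos_eq[OF edges])
    then obtain d where "d \<in> set D" "sqf_monomial G \<in> stanley_space (fst d) (snd d)"
      using sq_stanley_decompD(3)[OF D] by blast
    moreover obtain u Z where "d = (u, Z)" by (cases d)
    ultimately have "(u, Z) \<in> set D" "G \<in> interval (msupp u, Z)" using sqf_in_space by auto
    then show "\<exists>p\<in>(\<lambda>(u, Z). (msupp u, Z)) ` set D. G \<in> interval p"
      by (intro bexI[of _ "(msupp u, Z)"] image_eqI[of _ _ "(u, Z)"]) simp_all
  next
    fix p assume "p \<in> (\<lambda>(u, Z). (msupp u, Z)) ` set D"
    then obtain u Z where "(u, Z) \<in> set D" "p = (msupp u, Z)" by auto
    then show "fst p \<subseteq> snd p \<and> snd p \<subseteq> {..<n} \<and> indep_set E (snd p)" using piece by simp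
  qed simp
qed

lemma ex_sq_stanley_decomp_of_interval_partition:
  assumes edges: "\<forall>e\<in>E. \<exists>x y. x \<noteq> y \<and> e = {x, y}"
    and P: "interval_partition {..<n} E P" and r: "\<forall>p\<in>P. card (fst p) \<le> r"
  shows "\<exists>D. sq_stanley_decomp n E D \<and> stanley_reg_of n D \<le> r"
proof -
  let ?piece = "\<lambda>(F, Z). (sqf_monomial F, Z)"
  have "finite P" using P by (simp add: interval_partition_def)
  then obtain xs where xs: "set xs = P" "distinct xs" using finite_distinct_list by blast
  define D where "D = map ?piece xs"
  have "inj_on ?piece P"
    by (rule inj_onI) (metis (mono_tags, lifting) case_prod_beta msupp_sqf_monomial prod.expand prod.inject)
  then have "distinct D" using xs unfolding D_def by (simp add: distinct_map)
  have set_D: "set D = ?piece ` P" using xs unfolding D_def by simp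
  have space: "stanley_space (sqf_monomial (fst p)) (snd p) = {a. msupp a \<in> interval p}" if "p \<in> P" for p
    using interval_partition_cell[OF P that] by (simp add: stanley_space_squarefree squarefree_sqf_monomial)
  have "sq_stanley_decomp n E D"
  proof (rule sq_stanley_decompI[OF \<open>distinct D\<close>])
    fix d assume "d \<in> set D"
    then show "sq_stanley_piece n E d"
      using set_D interval_partition_cell[OF P]
      by (auto simp: sq_stanley_piece_iff[OF edges] squarefree_sqf_monomial)
  next
    fix d d' a assume "d \<in> set D" "d' \<in> set D"
      and "a \<in> stanley_space (fst d) (snd d)" "a \<in> stanley_space (fst d') (snd d')"
    then obtain p p' where "p \<in> P" "d = ?piece p" "p' \<in> P" "d' = ?piece p'"
      "msupp a \<in> interval p" "msupp a \<in> interval p'"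
      using set_D space by (auto simp: case_prod_beta)
    then show "d = d'" using interval_partition_unique[OF P] by metis
  next
    show "(\<Union>d\<in>set D. stanley_space (fst d) (snd d)) = standard_monos n E"
    proof (intro equalityI subsetI)
      fix a assume "a \<in> (\<Union>d\<in>set D. stanley_space (fst d) (snd d))"
      then obtain p where "p \<in> P" "msupp a \<in> interval p"
        using set_D space by (auto simp: case_prod_beta)
      then show "a \<in> standard_monos n E"
        using interval_partition_cell[OF P] indep_set_mono
        by (fastforce simp: standard_monos_eq[OF edges])
    next
      fix a assume "a \<in> standard_monos n E"
      then obtain p where "p \<in> P" "msupp a \<in> interval p"
        using interval_partition_cover[OF P, of "msupp a"] by (auto simp: standard_monos_eq[OF edges])
      then show "a \<in> (\<Union>d\<in>set D. stanley_space (fst d) (snd d))"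
        using set_D space by (force simp: case_prod_beta)
    qed
  qed
  moreover have "stanley_reg_of n D \<le> r"
  proof (rule stanley_reg_of_le)
    fix d assume "d \<in> set D"
    then obtain p where "p \<in> P" "d = ?piece p" using set_D by auto
    moreover have "fst p \<subseteq> {..<n}" using interval_partition_cell[OF P \<open>p \<in> P\<close>] by blast
    ultimately have "mdeg n (fst d) = card (fst p)"
      by (simp add: case_prod_beta mdeg_squarefree squarefree_sqf_monomial mono_set_iff_msupp)
    then show "mdeg n (fst d) \<le> r" using r \<open>p \<in> P\<close> by simp
  qed
  ultimately show ?thesis by blast
qed

lemma card_le_twice_stanley_reg_of:
  assumes E: "matching E" and EV: "\<forall>e\<in>E. e \<subseteq> {..<n}" and D: "sq_stanley_decomp n E D"
  shows "card E \<le> 2 * stanley_reg_of n D"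
proof (rule card_matching_le_twice_lower_card[OF E _ EV])
  have "\<forall>e\<in>E. \<exists>x y. x \<noteq> y \<and> e = {x, y}" using matching_edge[OF E] by blast
  then show "interval_partition {..<n} E ((\<lambda>(u, Z). (msupp u, Z)) ` set D)"
    using D by (rule interval_partition_of_sq_stanley_decomp)
  show "\<forall>p\<in>(\<lambda>(u, Z). (msupp u, Z)) ` set D. card (fst p) \<le> stanley_reg_of n D"
  proof
    fix p assume "p \<in> (\<lambda>(u, Z). (msupp u, Z)) ` set D"
    then obtain d where d: "d \<in> set D" "p = (msupp (fst d), snd d)" by (auto simp: case_prod_beta)
    then have "card (fst p) = mdeg n (fst d)"
      using sq_stanley_decompD(1)[OF D d(1)] by (simp add: sq_stanley_piece_def mdeg_squarefree)
    then show "card (fst p) \<le> stanley_reg_of n D" using mdeg_le_stanley_reg_of[OF d(1)] by simp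
  qed
qed simp

theorem corollary5p3:
  fixes n m :: nat and E :: "nat set set"
  assumes "m \<ge> 1"
    and "\<forall>e\<in>E. \<exists>x y. x \<noteq> y \<and> x < n \<and> y < n \<and> e = {x, y}"
    and "\<forall>e\<in>E. \<forall>f\<in>E. e \<noteq> f \<longrightarrow> e \<inter> f = {}"
    and "finite E" and "card E = m"
  shows "sreg n E = (m + 1) div 2"
proof -
  have edges: "\<forall>e\<in>E. \<exists>x y. x \<noteq> y \<and> e = {x, y}" using assms(2) by blast
  then have E: "matching E" using assms(3) by (simp add: matching_def)
  have EV: "\<forall>e\<in>E. e \<subseteq> {..<n}" using assms(2) by fastforce
  obtain P where "interval_partition {..<n} E P" "\<forall>p\<in>P. card (fst p) \<le> (m + 1) div 2"
    using ex_interval_partition_matching[OF E \<open>finite E\<close> EV] assms(5) by blast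
  then obtain D where D: "sq_stanley_decomp n E D" "stanley_reg_of n D \<le> (m + 1) div 2"
    using ex_sq_stanley_decomp_of_interval_partition[OF edges] by blast
  have lower: "(m + 1) div 2 \<le> stanley_reg_of n D'" if "sq_stanley_decomp n E D'" for D'
    using card_le_twice_stanley_reg_of[OF E EV that] assms(5) by linarith
  show ?thesis
    unfolding sreg_def
  proof (rule Least_equality)
    show "\<exists>D. sq_stanley_decomp n E D \<and> stanley_reg_of n D = (m + 1) div 2"
      using D lower[OF D(1)] by (intro exI[of _ D]) simp
  qed (use lower in blast)
qed

end
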